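(* Let $k,m,n\in\mathbb{N}$ with $n=k>m=1$, and let $b,c\in\mathbb{R}$ with $b\neq\pm1$. Let $$q(z)=bz^k+\overline{z}^n+c\,\overline{z}^m+z=\big(bz^k+z\big)+\overline{\big(z^n+cz^m\big)},$$ with dilatation function $$\omega(z)=\frac{(z^n+cz^m)'}{(bz^k+z)'}=\frac{nz^{n-1}+cmz^{m-1}}{bkz^{k-1}+1}.$$ Let $z$ be a point at which $\omega(z)$ is defined and such that $z^k\overline{z}$ is a pure imaginary number. Then $|\omega(z)|=1$ if and only if $$|z|=\left(\frac{1}{k}\right)^{\frac{1}{k-1}}\left(\frac{c^2-1}{b^2-1}\right)^{\frac{1}{2k-2}}.$$
   Context: $\overline{z}$ denotes the complex conjugate of $z$. For a harmonic polynomial $f=h+\overline{g}$ with $h,g$ analytic, its dilatation is $\omega=g'/h'$, defined where $h'\neq 0$. *)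

theory Defs
  imports "HOL-Analysis.Analysis"
begin

text \<open>Dilatation of the harmonic function f = h + conj g (h, g analytic):
  omega = g' / h', meaningful where h' is nonzero.\<close>
definition dilatation :: "(complex \<Rightarrow> complex) \<Rightarrow> (complex \<Rightarrow> complex) \<Rightarrow> complex \<Rightarrow> complex" where
  "dilatation h g z = deriv g z / deriv h z"

end

theory Submission
  imports Defs
begin

text \<open>Put u = k z^(k-1). The dilatation is (u + c) / (b u + 1), and since
  z^k conj z = |z|^2 z^(k-1), the hypothesis says that u = i y is purely imaginary.
  Then |omega| = 1 reads c^2 + y^2 = 1 + b^2 y^2, i.e.
  k^2 |z|^(2k-2) = y^2 = (c^2 - 1) / (b^2 - 1), which is solved for |z|.\<close>

lemma deriv_scaled_power_plus_id:
  fixes b z :: complex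
  shows "deriv (\<lambda>w. b * w ^ k + w) z = b * (of_nat k * z ^ (k - 1)) + 1"
  by (rule DERIV_imp_deriv) (auto intro!: derivative_eq_intros)

lemma deriv_power_plus_scaled_id:
  fixes c z :: complex
  shows "deriv (\<lambda>w. w ^ k + c * w) z = of_nat k * z ^ (k - 1) + c"
  by (rule DERIV_imp_deriv) (auto intro!: derivative_eq_intros)

lemma Re_power_Suc_mult_cnj: "Re (z ^ Suc j * cnj z) = (cmod z)\<^sup>2 * Re (z ^ j)"
proof -
  have "z ^ Suc j * cnj z = z ^ j * (z * cnj z)"
    by (simp add: mult_ac)
  also have "\<dots> = z ^ j * of_real ((cmod z)\<^sup>2)"
    by (simp only: complex_norm_square)
  finally show ?thesis
    by (simp only:) (simp add: mult.commute)
qed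

lemma norm_add_real_eq_norm_scale_add_one_iff:
  fixes u :: complex and b c :: real
  assumes "Re u = 0"
  shows "cmod (u + of_real c) = cmod (of_real b * u + 1) \<longleftrightarrow> (Im u)\<^sup>2 * (b\<^sup>2 - 1) = c\<^sup>2 - 1"
proof -
  have "cmod (u + of_real c) = cmod (of_real b * u + 1)
        \<longleftrightarrow> (cmod (u + of_real c))\<^sup>2 = (cmod (of_real b * u + 1))\<^sup>2"
    by (simp add: power2_eq_iff_nonneg)
  also have "\<dots> \<longleftrightarrow> c\<^sup>2 + (Im u)\<^sup>2 = 1 + b\<^sup>2 * (Im u)\<^sup>2"
    using assms by (simp add: cmod_power2 power_mult_distrib)
  finally show ?thesis
    by (auto simp: algebra_simps)
qed

lemma power_eq_iff_eq_powr:
  fixes t r :: real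
  assumes "t \<ge> 0" and "N > 0"
  shows "t ^ N = r \<longleftrightarrow> r \<ge> 0 \<and> t = r powr (1 / real N)"
proof (cases "t = 0")
  case True
  then show ?thesis
    using assms by auto
next
  case False
  then have "t > 0"
    using assms by simp
  then show ?thesis
    using assms by (auto simp: powr_realpow [symmetric] powr_powr)
qed

lemma scaled_power_eq_iff:
  fixes t r :: real and k :: nat
  assumes "t \<ge> 0" and "k \<ge> 2"
  shows "(real k)\<^sup>2 * t ^ (2 * k - 2) = r \<longleftrightarrow>
         r \<ge> 0 \<and> t = (1 / real k) powr (1 / (real k - 1)) * r powr (1 / (2 * real k - 2))"
proof -
  have exponent: "real (2 * k - 2) = 2 * real k - 2"
    using assms by simp
  have "1 / (real k)\<^sup>2 = (1 / real k) powr 2"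
    using assms by (simp add: powr_realpow power_divide)
  then have "(1 / (real k)\<^sup>2) powr (1 / (2 * real k - 2)) = (1 / real k) powr (2 * (1 / (2 * real k - 2)))"
    by (simp only: powr_powr)
  also have "2 * (1 / (2 * real k - 2)) = 1 / (real k - 1)"
    using assms by (simp add: field_simps)
  finally have root_of_scale: "(1 / (real k)\<^sup>2) powr (1 / (2 * real k - 2)) = (1 / real k) powr (1 / (real k - 1))" .
  have "(real k)\<^sup>2 * t ^ (2 * k - 2) = r \<longleftrightarrow> t ^ (2 * k - 2) = r / (real k)\<^sup>2"
    using assms by (auto simp: field_simps)
  also have "\<dots> \<longleftrightarrow> r \<ge> 0 \<and> t = (r / (real k)\<^sup>2) powr (1 / (2 * real k - 2))"
    using power_eq_iff_eq_powr [of t "2 * k - 2" "r / (real k)\<^sup>2"] assms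
    by (simp add: exponent zero_le_divide_iff)
  also have "\<dots> \<longleftrightarrow> r \<ge> 0 \<and> t = (1 / real k) powr (1 / (real k - 1)) * r powr (1 / (2 * real k - 2))"
    by (auto simp: powr_mult [symmetric] root_of_scale [symmetric])
  finally show ?thesis .
qed

theorem theorem3p8:
  fixes k m n :: nat and b c :: real and z :: complex
  assumes "n = k" and "k > m" and "m = 1"
    and "b \<noteq> 1" and "b \<noteq> -1"
    and "deriv (\<lambda>w. complex_of_real b * w ^ k + w) z \<noteq> 0"
    and "Re (z ^ k * cnj z) = 0"
  shows "cmod (dilatation (\<lambda>w. complex_of_real b * w ^ k + w)
                          (\<lambda>w. w ^ n + complex_of_real c * w ^ m) z) = 1
     \<longleftrightarrow> ((c\<^sup>2 - 1) / (b\<^sup>2 - 1) \<ge> 0 \<and>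
          cmod z = (1 / real k) powr (1 / (real k - 1))
                   * ((c\<^sup>2 - 1) / (b\<^sup>2 - 1)) powr (1 / (2 * real k - 2)))"
proof -
  define u where "u = of_nat k * z ^ (k - 1)"
  have k: "k \<ge> 2" "k = Suc (k - 1)"
    using assms by auto
  have "Re u = 0"
    using assms(7) Re_power_Suc_mult_cnj [of z "k - 1"] k by (auto simp: u_def)
  have "of_real b * u + 1 \<noteq> 0"
    using assms(6) by (simp add: deriv_scaled_power_plus_id u_def)
  moreover have "dilatation (\<lambda>w. complex_of_real b * w ^ k + w)
                          (\<lambda>w. w ^ n + complex_of_real c * w ^ m) z
                = (u + of_real c) / (of_real b * u + 1)"
    using assms(1,3)
    by (simp add: dilatation_def deriv_scaled_power_plus_id deriv_power_plus_scaled_id u_def)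
  ultimately have "cmod (dilatation (\<lambda>w. complex_of_real b * w ^ k + w)
                          (\<lambda>w. w ^ n + complex_of_real c * w ^ m) z) = 1
             \<longleftrightarrow> cmod (u + of_real c) = cmod (of_real b * u + 1)"
    by (auto simp: norm_divide divide_eq_1_iff)
  also have "\<dots> \<longleftrightarrow> (Im u)\<^sup>2 = (c\<^sup>2 - 1) / (b\<^sup>2 - 1)"
    using norm_add_real_eq_norm_scale_add_one_iff [OF \<open>Re u = 0\<close>] assms(4,5)
    by (simp add: eq_divide_eq power2_eq_1_iff)
  also have "(Im u)\<^sup>2 = (cmod u)\<^sup>2"
    using \<open>Re u = 0\<close> by (simp add: cmod_power2)
  also have "\<dots> = (real k)\<^sup>2 * cmod z ^ (2 * k - 2)"
    by (simp add: u_def norm_mult norm_power power_mult_distrib power_mult [symmetric]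
        mult.commute right_diff_distrib')
  finally show ?thesis
    using scaled_power_eq_iff [of "cmod z" k] k by simp
qed

end
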